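(* If $G$ is a $d$-regular Hadamard diagonalizable graph with $d$ odd, then for every vertex $u$ of $G$, $\uparrow^{2}G$ has Laplacian perfect state transfer between $(0,u)$ and $(1,u)$ at time $\frac{\pi}{2}$.
   Context: All graphs are simple, undirected and unweighted. A graph on $N$ vertices is Hadamard diagonalizable if its Laplacian matrix $L=D-A$ is diagonalizable by a Hadamard matrix, i.e. $L=\frac{1}{N}H\Lambda H^T$ for some diagonal $\Lambda$ and some $N\times N$ matrix $H$ with entries $\pm1$ satisfying $HH^T=NI$. The blow-up $\uparrow^{2}G$ has vertex set $\mathbb{Z}_2\times V(G)$, with $(l,u)\sim(m,v)$ iff $u\sim v$ in $G$. A graph with Laplacian $L$ has Laplacian perfect state transfer between $a,b$ at time $\tau$ if $\exp(i\tau L)\mathbf{e}_a=\gamma\mathbf{e}_b$ for some $\gamma\in\mathbb{C}$. *)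

theory Defs
  imports "HOL-Analysis.Analysis" "HOL-Library.Numeral_Type"
begin

definition simple_graph :: "('n \<Rightarrow> 'n \<Rightarrow> bool) \<Rightarrow> bool" where
  "simple_graph E \<longleftrightarrow> (\<forall>u v. E u v \<longrightarrow> E v u) \<and> (\<forall>u. \<not> E u u)"

definition degree :: "('n::finite \<Rightarrow> 'n \<Rightarrow> bool) \<Rightarrow> 'n \<Rightarrow> nat" where
  "degree E u = card {v. E u v}"

definition regular :: "('n::finite \<Rightarrow> 'n \<Rightarrow> bool) \<Rightarrow> nat \<Rightarrow> bool" where
  "regular E d \<longleftrightarrow> (\<forall>u. degree E u = d)"

definition laplacian :: "('n::finite \<Rightarrow> 'n \<Rightarrow> bool) \<Rightarrow> real ^'n^'n" where
  "laplacian E = (\<chi> i j. (if i = j then real (degree E i) else 0) - (if E i j then 1 else 0))"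

definition is_hadamard :: "real^'n^'n \<Rightarrow> bool" where
  "is_hadamard H \<longleftrightarrow> (\<forall>i j. H $ i $ j = 1 \<or> H $ i $ j = -1)
      \<and> H ** transpose H = of_nat CARD('n) *\<^sub>R mat 1"

definition is_diagonal :: "real^'n^'n \<Rightarrow> bool" where
  "is_diagonal M \<longleftrightarrow> (\<forall>i j. i \<noteq> j \<longrightarrow> M $ i $ j = 0)"

definition hadamard_diagonalizable :: "('n::finite \<Rightarrow> 'n \<Rightarrow> bool) \<Rightarrow> bool" where
  "hadamard_diagonalizable E \<longleftrightarrow>
     (\<exists>H \<Lambda>. is_hadamard H \<and> is_diagonal \<Lambda> \<and>
        laplacian E = (1 / real CARD('n)) *\<^sub>R (H ** \<Lambda> ** transpose H))"

definition blowup2 :: "('n \<Rightarrow> 'n \<Rightarrow> bool) \<Rightarrow> (2 \<times> 'n) \<Rightarrow> (2 \<times> 'n) \<Rightarrow> bool" where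
  "blowup2 E x y = E (snd x) (snd y)"

primrec cmatpow :: "complex^'n^'n \<Rightarrow> nat \<Rightarrow> complex^'n^'n" where
  "cmatpow A 0 = mat 1"
| "cmatpow A (Suc k) = A ** cmatpow A k"

text \<open>Matrix exponential, defined entrywise by the (always convergent) power series.\<close>
definition cmat_exp :: "complex^'n^'n \<Rightarrow> complex^'n^'n" where
  "cmat_exp A = (\<chi> i j. \<Sum>k. (cmatpow A k) $ i $ j / of_nat (fact k))"

definition laplacian_pst :: "('n::finite \<Rightarrow> 'n \<Rightarrow> bool) \<Rightarrow> 'n \<Rightarrow> 'n \<Rightarrow> real \<Rightarrow> bool" where
  "laplacian_pst E a b \<tau> \<longleftrightarrow>
     (\<exists>\<gamma>::complex. cmat_exp
          (\<chi> i j. \<i> * complex_of_real \<tau> * complex_of_real (laplacian E $ i $ j)) *v axis a 1 = \<gamma> *s axis b 1)"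

end

theory Submission
  imports Defs
begin

(* If L = (1/N) H \<Lambda> H^T with H Hadamard, then L H = H \<Lambda>, so every column h of H is a
   +-1 eigenvector of L. As L has integer entries, zero row sums and h = 1 (mod 2), the equation
   \<lambda> h_v = \<Sigma>_j L_vj (h_j - 1) shows that every eigenvalue \<lambda> is even.
   For d-regular G the Laplacian of the blow-up is [[L + dI, L - dI], [L - dI, L + dI]]; the Hadamard
   matrix [[H, H], [H, -H]] diagonalises it, with eigenvalue 2\<lambda> on (h, h) and 2d on (h, -h).
   At time \<pi>/2 the phases are exp(i\<pi>\<lambda>) = 1 and exp(i\<pi>d) = -1 for odd d, so the evolution fixes
   every (h, h), negates every (h, -h), and hence swaps the two copies (0, u) and (1, u) of each vertex. *)

lemma exhaust_2_zero_one: "(x :: 2) = 0 \<or> x = 1"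
  using exhaust_2[of x] by auto

lemma UNIV_2_eq: "(UNIV :: 2 set) = {0, 1}"
  using exhaust_2_zero_one by auto

lemma sum_UNIV_2: "(\<Sum>m\<in>UNIV. g m) = g (0::2) + g 1"
  by (simp add: UNIV_2_eq)

lemma sum_UNIV_prod:
  "(\<Sum>c\<in>(UNIV :: ('a::finite \<times> 'b::finite) set). g c) = (\<Sum>a\<in>UNIV. \<Sum>b\<in>UNIV. g (a, b))"
  by (simp only: sum.cartesian_product UNIV_Times_UNIV case_prod_eta)

definition diag_matrix :: "('n \<Rightarrow> 'a::zero) \<Rightarrow> 'a^'n^'n" where
  "diag_matrix f = (\<chi> i j. if i = j then f i else 0)"

lemma matrix_mult_diag_matrix:
  fixes A :: "'a::semiring_1^'n::finite^'m"
  shows "A ** diag_matrix f = (\<chi> i j. A$i$j * f j)"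
proof -
  have "(\<Sum>k\<in>UNIV. A$i$k * (if k = j then f k else 0)) = A$i$j * f j" for i j
    by (simp add: if_distrib[of "(*) _"] cong: if_cong)
  then show ?thesis
    by (simp add: vec_eq_iff matrix_matrix_mult_def diag_matrix_def)
qed

lemma diag_matrix_mult:
  fixes f g :: "'n::finite \<Rightarrow> 'a::semiring_1"
  shows "diag_matrix f ** diag_matrix g = diag_matrix (\<lambda>i. f i * g i)"
  unfolding matrix_mult_diag_matrix by (simp add: vec_eq_iff diag_matrix_def)

lemma diag_matrix_const: "diag_matrix (\<lambda>_. c) = mat c"
  by (simp add: diag_matrix_def mat_def)

lemma diag_matrix_scaleR: "diag_matrix (\<lambda>k. c * f k) = c *\<^sub>R (diag_matrix f :: real^'n^'n)"
  by (simp add: vec_eq_iff diag_matrix_def)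

lemma scaleR_mat_1: "c *\<^sub>R mat 1 = (mat c :: real^'n^'n)"
  by (simp add: vec_eq_iff mat_def)

lemma matrix_diag_matrix_matrix_entry:
  fixes A :: "'a::comm_semiring_1^'n::finite^'m"
  shows "(A ** diag_matrix f ** B) $ i $ j = (\<Sum>k\<in>UNIV. A$i$k * f k * B$k$j)"
  unfolding matrix_mult_diag_matrix by (simp add: matrix_matrix_mult_def)

lemma diag_matrix_diagonal: "is_diagonal \<Lambda> \<Longrightarrow> diag_matrix (\<lambda>k. \<Lambda>$k$k) = \<Lambda>"
  by (auto simp: is_diagonal_def diag_matrix_def vec_eq_iff)

lemma cmatpow_diagonalization:
  fixes P Q :: "complex^'n::finite^'n"
  assumes "P ** Q = mat 1"
  shows "cmatpow (P ** diag_matrix \<mu> ** Q) k = P ** diag_matrix (\<lambda>c. \<mu> c ^ k) ** Q"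
proof (induction k)
  case 0
  show ?case using assms by (simp add: diag_matrix_const)
next
  case (Suc k)
  have QP: "Q ** P = mat 1"
    using assms by (rule matrix_left_right_inverse1)
  have "cmatpow (P ** diag_matrix \<mu> ** Q) (Suc k)
      = P ** diag_matrix \<mu> ** (Q ** P) ** diag_matrix (\<lambda>c. \<mu> c ^ k) ** Q"
    by (simp add: Suc matrix_mul_assoc)
  also have "\<dots> = P ** diag_matrix (\<lambda>c. \<mu> c ^ Suc k) ** Q"
    by (simp add: QP diag_matrix_mult matrix_mul_assoc[symmetric] mult.commute)
  finally show ?case .
qed

lemma cmat_exp_diagonalization:
  fixes P Q :: "complex^'n::finite^'n"
  assumes "P ** Q = mat 1"
  shows "cmat_exp (P ** diag_matrix \<mu> ** Q) = P ** diag_matrix (\<lambda>c. exp (\<mu> c)) ** Q"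
proof -
  have "(\<lambda>k. cmatpow (P ** diag_matrix \<mu> ** Q) k $ i $ j / of_nat (fact k))
      sums (P ** diag_matrix (\<lambda>c. exp (\<mu> c)) ** Q) $ i $ j" for i j
  proof -
    have "(\<lambda>k. P$i$c * (\<mu> c ^ k /\<^sub>R fact k) * Q$c$j) sums (P$i$c * exp (\<mu> c) * Q$c$j)" for c
      using exp_converges[of "\<mu> c"] by (intro sums_mult sums_mult2)
    then have "(\<lambda>k. \<Sum>c\<in>UNIV. P$i$c * (\<mu> c ^ k /\<^sub>R fact k) * Q$c$j)
        sums (\<Sum>c\<in>UNIV. P$i$c * exp (\<mu> c) * Q$c$j)"
      by (rule sums_sum)
    then show ?thesis
      by (simp add: cmatpow_diagonalization[OF assms] matrix_diag_matrix_matrix_entry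
          sum_divide_distrib scaleR_conv_of_real divide_inverse sum_distrib_left mult_ac)
  qed
  then show ?thesis
    by (simp add: cmat_exp_def vec_eq_iff sums_iff)
qed

lemma hadamard_entry: "is_hadamard H \<Longrightarrow> H$i$j = 1 \<or> H$i$j = -1"
  by (simp add: is_hadamard_def)

lemma hadamard_rows_orthogonal:
  fixes H :: "real^'n::finite^'n"
  assumes "is_hadamard H"
  shows "(\<Sum>k\<in>UNIV. H$i$k * H$j$k) = (if i = j then real CARD('n) else 0)"
proof -
  have "(H ** transpose H) $ i $ j = (real CARD('n) *\<^sub>R mat 1) $ i $ j"
    using assms by (simp add: is_hadamard_def)
  then show ?thesis
    by (simp add: matrix_matrix_mult_def transpose_def mat_def)
qed

lemma hadamard_transpose_mult:
  fixes H :: "real^'n::finite^'n"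
  assumes "is_hadamard H"
  shows "transpose H ** H = real CARD('n) *\<^sub>R mat 1"
proof -
  let ?N = "real CARD('n)"
  have "H ** ((1 / ?N) *\<^sub>R transpose H) = (1 / ?N) *\<^sub>R (H ** transpose H)"
    by (simp add: matrix_scalar_ac scalar_matrix_assoc)
  also have "\<dots> = mat 1"
    using assms by (simp add: is_hadamard_def)
  finally have "((1 / ?N) *\<^sub>R transpose H) ** H = mat 1"
    by (rule matrix_left_right_inverse1)
  then have "(1 / ?N) *\<^sub>R (transpose H ** H) = mat 1"
    by (simp add: scalar_matrix_assoc)
  then have "?N *\<^sub>R ((1 / ?N) *\<^sub>R (transpose H ** H)) = ?N *\<^sub>R mat 1"
    by simp
  then show ?thesis
    by simp
qed

lemma hadamard_diagonalization_eigenvector: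
  fixes H :: "real^'n::finite^'n"
  assumes "is_hadamard H"
    and "A = (1 / real CARD('n)) *\<^sub>R (H ** diag_matrix \<theta> ** transpose H)"
  shows "A *v column k H = \<theta> k *s column k H"
proof -
  let ?N = "real CARD('n)"
  have "A ** H = (1 / ?N) *\<^sub>R (H ** diag_matrix \<theta> ** (transpose H ** H))"
    by (simp add: assms(2) matrix_mul_assoc scalar_matrix_assoc)
  also have "\<dots> = (1 / ?N) *\<^sub>R (?N *\<^sub>R (H ** diag_matrix \<theta>))"
    by (simp add: hadamard_transpose_mult[OF assms(1)] matrix_scalar_ac)
  finally have AH: "A ** H = H ** diag_matrix \<theta>"
    by simp
  have "A *v column k H = column k (A ** H)"
    by (simp add: vec_eq_iff column_def matrix_matrix_mult_def matrix_vector_mult_def)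
  then show ?thesis
    by (simp add: AH vec_eq_iff column_def matrix_mult_diag_matrix mult.commute)
qed

lemma cmat_exp_hadamard_diagonalization:
  fixes H :: "real^'n::finite^'n"
  assumes "is_hadamard H"
    and "A = (1 / real CARD('n)) *\<^sub>R (H ** diag_matrix \<theta> ** transpose H)"
  shows "cmat_exp (\<chi> i j. \<i> * of_real \<tau> * of_real (A$i$j)) $ i $ j
       = (\<Sum>c\<in>UNIV. of_real (H$i$c * H$j$c) * exp (\<i> * of_real (\<tau> * \<theta> c))) / of_nat CARD('n)"
proof -
  let ?N = "real CARD('n)"
  define P :: "complex^'n^'n" where "P = (\<chi> i c. of_real (H$i$c))"
  define Q :: "complex^'n^'n" where "Q = (\<chi> c j. of_real (H$j$c / ?N))"
  have "(P ** Q) $ i $ j = of_real ((\<Sum>c\<in>UNIV. H$i$c * H$j$c) / ?N)" for i j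
    by (simp add: P_def Q_def matrix_matrix_mult_def sum_divide_distrib)
  then have PQ: "P ** Q = mat 1"
    by (simp add: vec_eq_iff mat_def hadamard_rows_orthogonal[OF assms(1)])
  have M: "(\<chi> i j. \<i> * of_real \<tau> * of_real (A$i$j)) = P ** diag_matrix (\<lambda>c. \<i> * of_real (\<tau> * \<theta> c)) ** Q"
    by (simp add: vec_eq_iff assms(2) matrix_diag_matrix_matrix_entry P_def Q_def transpose_def
        sum_divide_distrib sum_distrib_left mult_ac)
  show ?thesis
    unfolding M cmat_exp_diagonalization[OF PQ]
    by (simp add: matrix_diag_matrix_matrix_entry P_def Q_def sum_divide_distrib mult_ac)
qed

definition kronecker :: "'a::times^'j^'i \<Rightarrow> 'a^'l^'k \<Rightarrow> 'a^('j \<times> 'l)^('i \<times> 'k)" where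
  "kronecker A B = (\<chi> x y. A $ fst x $ fst y * B $ snd x $ snd y)"

lemma kronecker_mult:
  fixes A :: "'a::comm_semiring_1^'j::finite^'i" and B :: "'a^'l::finite^'k"
  shows "kronecker A B ** kronecker C D = kronecker (A ** C) (B ** D)"
  by (simp add: vec_eq_iff kronecker_def matrix_matrix_mult_def sum_UNIV_prod sum_product mult_ac)

lemma transpose_kronecker: "transpose (kronecker A B) = kronecker (transpose A) (transpose B)"
  by (simp add: vec_eq_iff kronecker_def transpose_def)

lemma kronecker_mat: "kronecker (mat a) (mat b) = mat (a * b :: 'a::mult_zero)"
  by (simp add: vec_eq_iff kronecker_def mat_def prod_eq_iff)

lemma is_hadamard_kronecker:
  fixes A :: "real^'m::finite^'m" and B :: "real^'n::finite^'n"
  assumes "is_hadamard A" and "is_hadamard B"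
  shows "is_hadamard (kronecker A B)"
proof -
  have "kronecker A B ** transpose (kronecker A B) = kronecker (A ** transpose A) (B ** transpose B)"
    by (simp add: transpose_kronecker kronecker_mult)
  also have "\<dots> = real CARD('m \<times> 'n) *\<^sub>R mat 1"
    using assms by (simp add: is_hadamard_def scaleR_mat_1 kronecker_mat)
  moreover have "kronecker A B $ x $ y = 1 \<or> kronecker A B $ x $ y = -1" for x y
    using hadamard_entry[OF assms(1), of "fst x" "fst y"] hadamard_entry[OF assms(2), of "snd x" "snd y"]
    by (auto simp: kronecker_def)
  ultimately show ?thesis
    by (simp add: is_hadamard_def)
qed

definition sylvester2 :: "real^2^2" where
  "sylvester2 = (\<chi> i j. if i = 1 \<and> j = 1 then -1 else 1)"

lemma is_hadamard_sylvester2: "is_hadamard sylvester2"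
proof -
  have "(\<Sum>m\<in>UNIV. sylvester2 $ i $ m * sylvester2 $ j $ m) = (if i = j then 2 else 0)" for i j :: 2
    using exhaust_2[of i] exhaust_2[of j] by (auto simp: sum_UNIV_2 sylvester2_def)
  then show ?thesis
    by (auto simp: is_hadamard_def sylvester2_def vec_eq_iff matrix_matrix_mult_def transpose_def mat_def)
qed

lemma kronecker_diag_matrix_entry:
  fixes A :: "'a::comm_semiring_1^'m::finite^'m" and B :: "'a^'n::finite^'n"
  shows "(kronecker A B ** diag_matrix f ** transpose (kronecker A B)) $ (i, k) $ (j, l)
       = (\<Sum>m\<in>UNIV. A$i$m * A$j$m * (B ** diag_matrix (\<lambda>n. f (m, n)) ** transpose B) $ k $ l)"
  by (simp add: matrix_diag_matrix_matrix_entry kronecker_def transpose_def sum_UNIV_prod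
      sum_distrib_left mult_ac)

lemma kronecker_sylvester2_row_swap:
  "kronecker sylvester2 H $ (1, u) $ c = sylvester2 $ 1 $ fst c * kronecker sylvester2 H $ (0, u) $ c"
  by (simp add: kronecker_def sylvester2_def)

lemma eigenvalue_even_of_sign_eigenvector:
  fixes M :: "real^'n::finite^'n" and x :: "real^'n"
  assumes int: "\<And>i j. M$i$j \<in> \<int>" and row_sum: "\<And>i. (\<Sum>j\<in>UNIV. M$i$j) = 0"
    and sign: "\<And>j. x$j = 1 \<or> x$j = -1" and eig: "M *v x = \<mu> *s x"
  shows "\<mu> / 2 \<in> \<int>"
proof -
  \<comment> \<open>The vanishing row sum lets us replace x$j by x$j - 1, which lies in {0, -2}.\<close>
  fix v
  have "\<mu> * x$v = (M *v x)$v"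
    using eig by simp
  also have "\<dots> = (\<Sum>j\<in>UNIV. M$v$j * x$j)"
    by (simp add: matrix_vector_mult_def)
  also have "\<dots> = (\<Sum>j\<in>UNIV. M$v$j * (x$j - 1))"
    using row_sum[of v] by (simp add: right_diff_distrib sum_subtractf)
  finally have eig_v: "\<mu> * x$v = (\<Sum>j\<in>UNIV. M$v$j * (x$j - 1))" .
  have "\<mu> = \<mu> * x$v * x$v"
    using sign[of v] by auto
  also have "\<dots> = x$v * (\<Sum>j\<in>UNIV. M$v$j * (x$j - 1))"
    by (simp only: eig_v mult.commute)
  finally have half: "\<mu> / 2 = x$v * (\<Sum>j\<in>UNIV. M$v$j * ((x$j - 1) / 2))"
    by (simp add: sum_divide_distrib[symmetric])
  have "(x$j - 1) / 2 \<in> \<int>" "x$j \<in> \<int>" for j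
    using sign[of j] by auto
  then show ?thesis
    unfolding half by (intro Ints_mult Ints_sum int)
qed

lemma laplacian_entry_Ints: "laplacian E $ i $ j \<in> \<int>"
  by (simp add: laplacian_def)

lemma laplacian_row_sum: "(\<Sum>j\<in>UNIV. laplacian E $ i $ j) = 0"
  by (simp add: laplacian_def degree_def sum_subtractf sum.If_cases)

lemma hadamard_diagonalizable_laplacian_eigenvalue_even:
  fixes H :: "real^'n::finite^'n"
  assumes "is_hadamard H"
    and "laplacian E = (1 / real CARD('n)) *\<^sub>R (H ** diag_matrix \<theta> ** transpose H)"
  shows "\<theta> k / 2 \<in> \<int>"
proof (rule eigenvalue_even_of_sign_eigenvector[OF laplacian_entry_Ints laplacian_row_sum])
  show "column k H $ j = 1 \<or> column k H $ j = -1" for j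
    by (simp add: column_def hadamard_entry[OF assms(1)])
  show "laplacian E *v column k H = \<theta> k *s column k H"
    by (rule hadamard_diagonalization_eigenvector[OF assms])
qed

lemma degree_blowup2: "degree (blowup2 E) x = 2 * degree E (snd x)"
proof -
  have "{y. blowup2 E x y} = (UNIV :: 2 set) \<times> {v. E (snd x) v}"
    by (auto simp: blowup2_def)
  then show ?thesis
    by (simp add: degree_def card_cartesian_product)
qed

lemma regular_blowup2: "regular E d \<Longrightarrow> regular (blowup2 E) (2 * d)"
  by (simp add: regular_def degree_blowup2)

lemma laplacian_regular_entry:
  "regular E d \<Longrightarrow> laplacian E $ u $ v = (if u = v then real d else 0) - (if E u v then 1 else 0)"
  by (simp add: laplacian_def regular_def)

lemma laplacian_blowup2_hadamard_diagonalization: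
  fixes E :: "'n::finite \<Rightarrow> 'n \<Rightarrow> bool" and H :: "real^'n^'n"
  assumes reg: "regular E d" and had: "is_hadamard H"
    and L: "laplacian E = (1 / real CARD('n)) *\<^sub>R (H ** diag_matrix \<theta> ** transpose H)"
  shows "laplacian (blowup2 E) = (1 / real CARD(2 \<times> 'n)) *\<^sub>R
      (kronecker sylvester2 H ** diag_matrix (\<lambda>c. if fst c = 0 then 2 * \<theta> (snd c) else 2 * real d)
        ** transpose (kronecker sylvester2 H))"
    (is "_ = _ *\<^sub>R (?K ** diag_matrix ?\<theta>2 ** _)")
proof -
  let ?N = "real CARD('n)"
  let ?s = "\<lambda>l. sylvester2 $ l $ 1"
  have layer0: "H ** diag_matrix (\<lambda>k. 2 * \<theta> k) ** transpose H = (2 * ?N) *\<^sub>R laplacian E"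
    by (simp add: L diag_matrix_scaleR matrix_scalar_ac scalar_matrix_assoc[symmetric])
  have layer1: "H ** diag_matrix (\<lambda>_. 2 * real d) ** transpose H = (2 * real d * ?N) *\<^sub>R mat 1"
  proof -
    have "diag_matrix (\<lambda>_. 2 * real d) = (2 * real d) *\<^sub>R (mat 1 :: real^'n^'n)"
      by (simp add: diag_matrix_const scaleR_mat_1)
    then show ?thesis
      using had by (simp add: matrix_scalar_ac scalar_matrix_assoc[symmetric] is_hadamard_def)
  qed
  have "(?K ** diag_matrix ?\<theta>2 ** transpose ?K) $ (l, u) $ (l', u')
      = 2 * ?N * laplacian E $ u $ u' + ?s l * ?s l' * (2 * real d * ?N * (if u = u' then 1 else 0))"
    for l l' u u'
    by (simp add: kronecker_diag_matrix_entry sum_UNIV_2 layer0 layer1 sylvester2_def mat_def)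
  also have "\<dots> l l' u u' = real CARD(2 \<times> 'n) * laplacian (blowup2 E) $ (l, u) $ (l', u')" for l l' u u'
    using exhaust_2_zero_one[of l] exhaust_2_zero_one[of l']
    by (auto simp: laplacian_regular_entry[OF reg] laplacian_regular_entry[OF regular_blowup2[OF reg]]
        sylvester2_def blowup2_def algebra_simps)
  finally show ?thesis
    by (simp add: vec_eq_iff)
qed

lemma laplacian_pst_of_column:
  assumes "\<And>x. cmat_exp (\<chi> i j. \<i> * of_real \<tau> * of_real (laplacian E $ i $ j)) $ x $ a
      = (if x = b then 1 else 0)"
  shows "laplacian_pst E a b \<tau>"
  unfolding laplacian_pst_def
  by (intro exI[of _ 1])
    (simp add: assms vec_eq_iff matrix_vector_mult_def axis_def if_distrib[of "(*) _"] cong: if_cong)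

lemma exp_i_pi_times_even: "t / 2 \<in> \<int> \<Longrightarrow> exp (\<i> * of_real (pi * t)) = 1"
proof -
  assume "t / 2 \<in> \<int>"
  then obtain z where "t = 2 * of_int z"
    by (metis Ints_cases nonzero_mult_div_cancel_left times_divide_eq_right zero_neq_numeral)
  then have "\<i> * of_real (pi * t) = \<i> * (of_int z * (of_real pi * 2))"
    by (simp add: mult_ac)
  then show ?thesis
    by (simp only: exp_2pi_1_int)
qed

lemma exp_i_pi_times_odd: "odd d \<Longrightarrow> exp (\<i> * of_real (pi * real d)) = -1"
proof -
  assume "odd d"
  then obtain k where "d = 2 * k + 1"
    using oddE by blast
  then have "\<i> * of_real (pi * real d) = \<i> * (of_nat k * (of_real pi * 2)) + \<i> * of_real pi"
    by (simp add: algebra_simps)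
  then show ?thesis
    by (simp add: exp_add)
qed

theorem corollary5:
  fixes E :: "'n::finite \<Rightarrow> 'n \<Rightarrow> bool" and d :: nat
  assumes "simple_graph E" and "regular E d" and "hadamard_diagonalizable E" and "odd d"
  shows "\<forall>u. laplacian_pst (blowup2 E) (0, u) (1, u) (pi / 2)"
proof
  fix u
  obtain H \<Lambda> where had: "is_hadamard H" and "is_diagonal \<Lambda>"
    and "laplacian E = (1 / real CARD('n)) *\<^sub>R (H ** \<Lambda> ** transpose H)"
    using assms(3) unfolding hadamard_diagonalizable_def by blast
  then have L: "laplacian E = (1 / real CARD('n)) *\<^sub>R (H ** diag_matrix (\<lambda>k. \<Lambda>$k$k) ** transpose H)"
    by (simp add: diag_matrix_diagonal)
  let ?K = "kronecker sylvester2 H"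
  have phase: "exp (\<i> * of_real (pi / 2 * (if fst c = 0 then 2 * \<Lambda>$snd c$snd c else 2 * real d)))
      = of_real (sylvester2 $ 1 $ fst c)" for c
    using exhaust_2_zero_one[of "fst c"]
      exp_i_pi_times_even[OF hadamard_diagonalizable_laplacian_eigenvalue_even[OF had L]]
      exp_i_pi_times_odd[OF assms(4)]
    by (auto simp: sylvester2_def)
  have "cmat_exp (\<chi> i j. \<i> * of_real (pi / 2) * of_real (laplacian (blowup2 E) $ i $ j)) $ x $ (0, u)
      = (\<Sum>c\<in>UNIV. of_real (?K$x$c * ?K$(1, u)$c)) / of_nat CARD(2 \<times> 'n)" for x
    unfolding cmat_exp_hadamard_diagonalization[OF is_hadamard_kronecker[OF is_hadamard_sylvester2 had]
        laplacian_blowup2_hadamard_diagonalization[OF assms(2) had L]] phase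
    by (simp add: kronecker_sylvester2_row_swap mult_ac)
  also have "\<dots> x = (if x = (1, u) then 1 else 0)" for x
    unfolding of_real_sum[symmetric] hadamard_rows_orthogonal[OF is_hadamard_kronecker[OF is_hadamard_sylvester2 had]]
    by simp
  finally show "laplacian_pst (blowup2 E) (0, u) (1, u) (pi / 2)"
    by (rule laplacian_pst_of_column)
qed

end
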